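(* Let $K\subseteq\mathbb{R}^d$ be a convex body, $\varepsilon>0$, $i\in I^\pm$, and let $\mathrm{Cap}_\varepsilon(p)(K_i^* )$ be any useful $\varepsilon$-cap induced by an augmented point $p\in\overline{\partial}K_i^*$. Then $\mathrm{Cap}_\varepsilon(p)(K_i^* )^\downarrow$ lies within a ball of radius $O(1)$ centered at the origin, where the constant depends only on $d$.
   Context: For a unit vector $u$, $H^+(u)$ is the closed supporting halfspace of $K$ with outer normal $u$. Let $e_1,\dots,e_d$ be the coordinate unit vectors, $e_{-j}=-e_j$, $I^\pm=\{\pm1,\dots,\pm d\}$, $V_i=\{u\in\mathbb{S}^{d-1}:\langle u,e_i\rangle\ge\langle u,e_j\rangle\ \forall j\in I^\pm,j\ne i\}$, $S_i=\bigcap_{u\in V_i}H^+(u)$. Fix $i$ and use orthonormal coordinates $(x_1,\dots,x_{d-1},y)$ in which $e_i$ is the upward $y$-direction and the $x$-coordinates are the remaining original coordinates (up to sign); $S^\downarrow$ is orthogonal projection onto $\{y=0\}\cong\mathbb{R}^{d-1}$, and $S\pm\varepsilon$ vertical translation. $K^\downarrow\oplus\alpha$ is the set of points of $\{y=0\}$ within distance $\alpha$ of $K^\downarrow$; $K_i^{(\alpha)}=\{x\in S_i:x^\downarrow\in K^\downarrow\oplus\alpha\}$, $K_i=K_i^{(2\varepsilon)}$. For a closed convex set $U$ in which every upward vertical ray from a boundary point lies in $U$ (U-shaped), $\overline{\partial}U$ is the set of boundary points with a non-vertical supporting hyperplane, each point augmented by a choice $h(q)$ of such a hyperplane. The projective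 dual of a point $p$ is the hyperplane $p^*:y=\sum_{j=1}^{d-1}p_jx_j-p_d$ (with $p^{**}=p$ for non-vertical hyperplanes); $K_i^*$ is the intersection of the closed upper halfspaces of $q^*$ for $q\in\overline{\partial}K_i$. The augmented point $q\in\overline{\partial}K_i$ with hyperplane $h(q)$ corresponds to $h(q)^*\in\overline{\partial}K_i^*$ with supporting hyperplane $q^*$. The $\varepsilon$-cap $\mathrm{Cap}_\varepsilon(p)(K_i^* )$ is the set of augmented points of $\overline{\partial}K_i^*$ in the closed lower halfspace of $h(p)+\varepsilon$. It is useful if $p$ corresponds to a point $q\in\overline{\partial}K_i$ lying on the lower boundary of $K_i^{(\varepsilon)}$. *)

theory Defs
  imports "HOL-Analysis.Analysis"
begin

text \<open>Ambient space R^d is real^'n (d = CARD('n)).\<close>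

definition convex_body :: "(real^'n) set \<Rightarrow> bool" where
  "convex_body K \<longleftrightarrow> compact K \<and> convex K \<and> interior K \<noteq> {}"

definition supp_fun :: "(real^'n) set \<Rightarrow> real^'n \<Rightarrow> real" where
  "supp_fun K u = (SUP x\<in>K. x \<bullet> u)"

definition Hplus :: "(real^'n) set \<Rightarrow> real^'n \<Rightarrow> (real^'n) set" where
  "Hplus K u = {x. x \<bullet> u \<le> supp_fun K u}"

text \<open>Signed indices I^pm: (k, True) stands for +k, (k, False) for -k.\<close>
definition evec :: "'n \<times> bool \<Rightarrow> real^'n" where
  "evec i = (if snd i then axis (fst i) 1 else - axis (fst i) 1)"

definition Vset :: "'n \<times> bool \<Rightarrow> (real^'n) set" where
  "Vset i = {u. norm u = 1 \<and> (\<forall>j. j \<noteq> i \<longrightarrow> u \<bullet> evec j \<le> u \<bullet> evec i)}"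

definition Sreg :: "(real^'n) set \<Rightarrow> 'n \<times> bool \<Rightarrow> (real^'n) set" where
  "Sreg K i = (\<Inter>u\<in>Vset i. Hplus K u)"

text \<open>Lifted frame for index i=(k,s): coordinate k is the vertical coordinate y,
  the others are the horizontal coordinates x.  The vertical coordinate is
  y = -<v, e_i>, so that S_i is U-shaped (contains upward rays).\<close>
definition frame :: "'n \<times> bool \<Rightarrow> real^'n \<Rightarrow> real^'n" where
  "frame i v = (\<chi> j. if j = fst i then - (v \<bullet> evec i) else v $ j)"

definition down :: "'n \<Rightarrow> real^'n \<Rightarrow> real^'n" where
  "down k w = (\<chi> j. if j = k then 0 else w $ j)"

definition thick :: "'n \<Rightarrow> (real^'n) set \<Rightarrow> real \<Rightarrow> (real^'n) set" where
  "thick k A \<alpha> = {z. z $ k = 0 \<and> (\<exists>a\<in>A. dist z a \<le> \<alpha>)}"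

definition Ki_alpha :: "(real^'n) set \<Rightarrow> 'n \<times> bool \<Rightarrow> real \<Rightarrow> (real^'n) set" where
  "Ki_alpha K i \<alpha> = {w \<in> frame i ` Sreg K i.
      down (fst i) w \<in> thick (fst i) (down (fst i) ` frame i ` K) \<alpha>}"

definition Ki :: "(real^'n) set \<Rightarrow> 'n \<times> bool \<Rightarrow> real \<Rightarrow> (real^'n) set" where
  "Ki K i \<epsilon> = Ki_alpha K i (2 * \<epsilon>)"

text \<open>Projective dual p* of a point p: y = sum_{j<>k} p_j x_j - p_k (vertical coordinate k).
  A non-vertical hyperplane h is represented by the unique point a with a* = h.\<close>
definition dualhyp :: "'n \<Rightarrow> real^'n \<Rightarrow> (real^'n) set" where
  "dualhyp k p = {w. w $ k = (\<Sum>j\<in>UNIV - {k}. p $ j * w $ j) - p $ k}"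

definition upper :: "'n \<Rightarrow> real^'n \<Rightarrow> (real^'n) set" where
  "upper k p = {w. w $ k \<ge> (\<Sum>j\<in>UNIV - {k}. p $ j * w $ j) - p $ k}"

definition lower :: "'n \<Rightarrow> real^'n \<Rightarrow> (real^'n) set" where
  "lower k p = {w. w $ k \<le> (\<Sum>j\<in>UNIV - {k}. p $ j * w $ j) - p $ k}"

text \<open>Augmented boundary: pairs (q, a) with q a boundary point and a* = h(q) a
  non-vertical supporting hyperplane at q.\<close>
definition aug_bd :: "'n::finite \<Rightarrow> (real^'n) set \<Rightarrow> ((real^'n) \<times> (real^'n)) set" where
  "aug_bd k U = {(q, a). q \<in> frontier U \<and> q \<in> dualhyp k a \<and>
                   (U \<subseteq> upper k a \<or> U \<subseteq> lower k a)}"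

definition Kdual :: "'n \<Rightarrow> (real^'n) set \<Rightarrow> (real^'n) set" where
  "Kdual k U = \<Inter> {upper k q | q a. (q, a) \<in> aug_bd k U}"

definition lower_bd :: "'n \<Rightarrow> (real^'n) set \<Rightarrow> (real^'n) set" where
  "lower_bd k A = {q \<in> A. \<forall>t>0. q - t *\<^sub>R axis k 1 \<notin> A}"

definition cap :: "'n \<Rightarrow> real \<Rightarrow> (real^'n) \<times> (real^'n) \<Rightarrow> (real^'n) set
                     \<Rightarrow> ((real^'n) \<times> (real^'n)) set" where
  "cap k \<epsilon> p V = {(r, b) \<in> aug_bd k V.
       r $ k \<le> (\<Sum>j\<in>UNIV - {k}. snd p $ j * r $ j) - snd p $ k + \<epsilon>}"

text \<open>Useful: p = (h(q)^*, q*) corresponds to the augmented point (q, h(q)) of the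
  augmented boundary of K_i, with q on the lower boundary of K_i^(eps).\<close>
definition useful :: "(real^'n) set \<Rightarrow> 'n \<times> bool \<Rightarrow> real \<Rightarrow> (real^'n) \<times> (real^'n) \<Rightarrow> bool" where
  "useful K i \<epsilon> p \<longleftrightarrow>
     p \<in> aug_bd (fst i) (Kdual (fst i) (Ki K i \<epsilon>)) \<and>
     (snd p, fst p) \<in> aug_bd (fst i) (Ki K i \<epsilon>) \<and>
     snd p \<in> lower_bd (fst i) (Ki_alpha K i \<epsilon>)"

end

theory Submission
  imports Defs
begin

(* Let q be the point of K_i^(eps) inducing the cap and r a point of the cap.  Move eps
   horizontally from q's projection in the direction of r's projection and let q' be the lowest
   point of S_i above the result.  Then q' lies in K_i, on its boundary, where it is supported by
   the hyperplane a* of a face of S_i with some normal u in V_i; as u is dominated by its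
   e_i-component, the slope of a* is at most d in norm.  Being a point of K_i^*, r lies above
   the hyperplane q'*, and by the cap condition at most eps below q*.  Hence
     eps |r_x| = <q'_x - q_x, r_x> <= q'_y - q_y + eps <= <a_x, q'_x - q_x> + eps <= (d + 1) eps. *)

lemma inner_down_commute: "down k p \<bullet> w = p \<bullet> down k w"
  by (auto simp: inner_vec_def down_def intro!: sum.cong)

lemma down_down [simp]: "down k (down k x) = down k x"
  by (simp add: vec_eq_iff down_def)

lemma down_axis [simp]: "down k (axis k c) = 0"
  by (simp add: vec_eq_iff down_def axis_def)

lemma down_add [simp]: "down k (x + y) = down k x + down k y"
  by (simp add: vec_eq_iff down_def)

lemma down_scaleR [simp]: "down k (c *\<^sub>R x) = c *\<^sub>R down k x"
  by (simp add: vec_eq_iff down_def)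

lemma inner_down_axis [simp]: "down k p \<bullet> axis k c = 0"
  by (simp add: inner_down_commute)

lemma inner_down_down: "down k p \<bullet> down k w = down k p \<bullet> w"
  by (metis down_down inner_down_commute)

lemma sum_horizontal_eq_inner_down:
  "(\<Sum>j\<in>UNIV - {k}. p $ j * w $ j) = down k p \<bullet> w"
proof -
  have "down k p \<bullet> w = (\<Sum>j\<in>UNIV. if j = k then 0 else p $ j * w $ j)"
    by (auto simp: inner_vec_def down_def intro!: sum.cong)
  also have "\<dots> = (\<Sum>j\<in>UNIV - {k}. p $ j * w $ j)"
    by (rule sum.mono_neutral_cong_right) auto
  finally show ?thesis ..
qed

lemma mem_upper_iff: "w \<in> upper k p \<longleftrightarrow> down k p \<bullet> w - p $ k \<le> w $ k"
  by (simp add: upper_def sum_horizontal_eq_inner_down)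

lemma mem_dualhyp_iff: "w \<in> dualhyp k p \<longleftrightarrow> w $ k = down k p \<bullet> w - p $ k"
  by (simp add: dualhyp_def sum_horizontal_eq_inner_down)

lemma closed_Kdual: "closed (Kdual k U)"
  unfolding Kdual_def upper_def
  by (intro closed_Inter) (auto intro!: closed_Collect_le continuous_intros)

lemma frontier_if_on_dualhyp:
  assumes "U \<subseteq> upper k a" "w \<in> U" "w \<in> dualhyp k a"
  shows "w \<in> frontier U"
  unfolding frontier_def
proof
  show "w \<in> closure U" using assms(2) closure_subset by blast
  show "w \<notin> interior U"
  proof
    assume "w \<in> interior U"
    then obtain e where "e > 0" "ball w e \<subseteq> U"
      using mem_interior by blast
    moreover have "w - (e/2) *\<^sub>R axis k 1 \<in> ball w e"
      using \<open>e > 0\<close> by (simp add: dist_norm)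
    ultimately have "w - (e/2) *\<^sub>R axis k 1 \<in> upper k a"
      using assms(1) by blast
    then show False
      using assms(3) \<open>e > 0\<close>
      by (simp add: mem_upper_iff mem_dualhyp_iff inner_diff_right)
  qed
qed

lemma inner_evec: "u \<bullet> evec i = (if snd i then u $ fst i else - u $ fst i)"
  by (simp add: evec_def inner_axis)

lemma evec_in_Vset: "evec i \<in> Vset i"
  unfolding Vset_def
proof (intro CollectI conjI allI impI)
  show "norm (evec i) = 1" by (simp add: evec_def)
  fix j assume "j \<noteq> i"
  then show "evec i \<bullet> evec j \<le> evec i \<bullet> evec i"
    by (cases i, cases j) (auto simp: evec_def inner_axis_axis)
qed

lemma compact_Vset: "compact (Vset i)"
proof -
  have "Vset i = sphere 0 1 \<inter> (\<Inter>j\<in>{j. j \<noteq> i}. {u. u \<bullet> (evec j - evec i) \<le> 0})"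
    by (auto simp: Vset_def inner_diff_right)
  moreover have "closed (\<Inter>j\<in>{j. j \<noteq> i}. {u. u \<bullet> (evec j - evec i) \<le> 0})"
    by (intro closed_INT ballI closed_Collect_le continuous_intros)
  ultimately show ?thesis by (simp add: compact_Int_closed)
qed

lemma Vset_abs_le:
  assumes "u \<in> Vset i" "j \<noteq> fst i"
  shows "\<bar>u $ j\<bar> \<le> u \<bullet> evec i"
proof -
  have "u \<bullet> evec (j, b) \<le> u \<bullet> evec i" for b
    using assms by (auto simp: Vset_def)
  from this[of True] this[of False] show ?thesis by (simp add: inner_evec)
qed

lemma Vset_inner_evec_pos:
  assumes "u \<in> Vset i"
  shows "u \<bullet> evec i > 0"
proof (rule ccontr)
  assume "\<not> u \<bullet> evec i > 0"
  moreover have "u \<bullet> evec (fst i, \<not> snd i) \<le> u \<bullet> evec i"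
    using assms by (auto simp: Vset_def prod_eq_iff)
  ultimately have "u \<bullet> evec i = 0"
    by (auto simp: inner_evec split: if_splits)
  with Vset_abs_le[OF assms] have "u $ j = 0" for j
    by (cases "j = fst i") (auto simp: inner_evec split: if_splits)
  then have "u = 0" by (simp add: vec_eq_iff)
  with assms show False by (simp add: Vset_def)
qed

lemma norm_down_Vset_le:
  fixes u :: "real^'n"
  assumes "u \<in> Vset i"
  shows "norm (down (fst i) u) \<le> CARD('n) * (u \<bullet> evec i)"
proof -
  have "norm (down (fst i) u) \<le> (\<Sum>j\<in>UNIV. \<bar>down (fst i) u $ j\<bar>)"
    by (rule norm_le_l1_cart)
  also have "\<dots> \<le> (\<Sum>j\<in>(UNIV::'n set). u \<bullet> evec i)"
    using Vset_abs_le[OF assms] Vset_inner_evec_pos[OF assms]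
    by (intro sum_mono) (simp add: down_def)
  finally show ?thesis by simp
qed

lemma supp_fun_le_add_norm_diff:
  assumes "K \<noteq> {}" "\<And>x. x \<in> K \<Longrightarrow> norm x \<le> B"
  shows "supp_fun K u \<le> supp_fun K v + B * norm (u - v)"
proof -
  have inner_le: "x \<bullet> w \<le> B * norm w" if "x \<in> K" for x w
    using Cauchy_Schwarz_ineq2[of x w] assms(2)[OF that] by (smt (verit) mult_right_mono norm_ge_zero)
  then have "bdd_above ((\<lambda>x. x \<bullet> v) ` K)"
    by (rule bdd_aboveI2)
  have "x \<bullet> u \<le> supp_fun K v + B * norm (u - v)" if "x \<in> K" for x
  proof -
    have "x \<bullet> v \<le> supp_fun K v"
      unfolding supp_fun_def by (rule cSUP_upper[OF that \<open>bdd_above _\<close>])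
    with inner_le[OF that, of "u - v"] show ?thesis by (simp add: inner_diff_right)
  qed
  then show ?thesis
    unfolding supp_fun_def[of K u] using assms(1) by (rule cSUP_least[rotated])
qed

lemma continuous_on_supp_fun:
  assumes "compact K" "K \<noteq> {}"
  shows "continuous_on S (supp_fun K)"
proof -
  obtain B where B: "\<And>x. x \<in> K \<Longrightarrow> norm x \<le> B" "B \<ge> 0"
    using compact_imp_bounded[OF assms(1)] assms(2) unfolding bounded_iff
    by (meson ex_in_conv norm_ge_zero order_trans)
  have "B-lipschitz_on S (supp_fun K)"
  proof (rule lipschitz_onI)
    fix u v
    show "dist (supp_fun K u) (supp_fun K v) \<le> B * dist u v"
      using supp_fun_le_add_norm_diff[OF assms(2) B(1), of u v]
        supp_fun_le_add_norm_diff[OF assms(2) B(1), of v u]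
      by (simp add: dist_real_def dist_norm norm_minus_commute abs_le_iff)
  qed (rule B(2))
  then show ?thesis by (rule lipschitz_on_continuous_on)
qed

lemma frame_frame [simp]: "frame i (frame i v) = v"
  by (simp add: vec_eq_iff frame_def inner_evec)

lemma down_frame [simp]: "down (fst i) (frame i v) = down (fst i) v"
  by (simp add: vec_eq_iff frame_def down_def)

lemma frame_nth_fst [simp]: "frame i v $ fst i = - (v \<bullet> evec i)"
  by (simp add: frame_def)

lemma inner_eq_down_plus: "v \<bullet> u = down k v \<bullet> u + v $ k * u $ k"
proof -
  have "v \<bullet> u = v $ k * u $ k + (\<Sum>j\<in>UNIV - {k}. v $ j * u $ j)"
    by (simp add: inner_vec_def sum.remove[of UNIV k])
  then show ?thesis by (simp add: sum_horizontal_eq_inner_down)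
qed

lemma inner_eq_frame:
  "v \<bullet> u = down (fst i) (frame i v) \<bullet> u - frame i v $ fst i * (u \<bullet> evec i)"
  by (simp add: inner_eq_down_plus[of v u "fst i"] inner_evec)

lemma mem_frame_Sreg_iff:
  "w \<in> frame i ` Sreg K i \<longleftrightarrow>
     (\<forall>u\<in>Vset i. down (fst i) w \<bullet> u - w $ fst i * (u \<bullet> evec i) \<le> supp_fun K u)"
proof -
  have "w \<in> frame i ` Sreg K i \<longleftrightarrow> frame i w \<in> Sreg K i"
    by (metis frame_frame image_iff)
  then show ?thesis
    by (simp add: Sreg_def Hplus_def inner_eq_frame[of "frame i w" _ i])
qed

text \<open>In the frame of \<open>i\<close>, the halfspace \<open>H\<^sup>+(u)\<close> becomes the upper halfspace of
  \<open>a\<^sup>*\<close> for \<open>a = supp_dual K i u\<close>.\<close>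

definition supp_dual :: "(real^'n) set \<Rightarrow> 'n \<times> bool \<Rightarrow> real^'n \<Rightarrow> real^'n" where
  "supp_dual K i u =
     (\<chi> j. if j = fst i then supp_fun K u / (u \<bullet> evec i) else u $ j / (u \<bullet> evec i))"

lemma down_supp_dual: "down (fst i) (supp_dual K i u) = (1 / (u \<bullet> evec i)) *\<^sub>R down (fst i) u"
  by (simp add: vec_eq_iff supp_dual_def down_def)

lemma norm_down_supp_dual_le:
  fixes u :: "real^'n"
  assumes "u \<in> Vset i"
  shows "norm (down (fst i) (supp_dual K i u)) \<le> CARD('n)"
  using norm_down_Vset_le[OF assms] Vset_inner_evec_pos[OF assms]
  by (simp add: down_supp_dual divide_le_eq)

lemma supp_dual_hyperplane:
  assumes "u \<in> Vset i"
  shows "down (fst i) (supp_dual K i u) \<bullet> w - supp_dual K i u $ fst i - w $ fst i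
           = (down (fst i) w \<bullet> u - w $ fst i * (u \<bullet> evec i) - supp_fun K u) / (u \<bullet> evec i)"
proof -
  have "down (fst i) (supp_dual K i u) \<bullet> w = (down (fst i) w \<bullet> u) / (u \<bullet> evec i)"
    by (simp add: down_supp_dual) (metis inner_commute inner_down_commute)
  then show ?thesis
    using Vset_inner_evec_pos[OF assms] by (simp add: supp_dual_def field_simps)
qed

lemma mem_upper_supp_dual_iff:
  assumes "u \<in> Vset i"
  shows "w \<in> upper (fst i) (supp_dual K i u)
           \<longleftrightarrow> down (fst i) w \<bullet> u - w $ fst i * (u \<bullet> evec i) \<le> supp_fun K u"
proof -
  have "\<And>t. t / (u \<bullet> evec i) \<le> 0 \<longleftrightarrow> t \<le> 0"
    using Vset_inner_evec_pos[OF assms] by (simp add: divide_le_0_iff)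
  then show ?thesis
    using supp_dual_hyperplane[OF assms, of K w] by (metis mem_upper_iff diff_le_0_iff_le)
qed

lemma mem_dualhyp_supp_dual_iff:
  assumes "u \<in> Vset i"
  shows "w \<in> dualhyp (fst i) (supp_dual K i u)
           \<longleftrightarrow> down (fst i) w \<bullet> u - w $ fst i * (u \<bullet> evec i) = supp_fun K u"
  using supp_dual_hyperplane[OF assms, of K w] Vset_inner_evec_pos[OF assms]
  by (auto simp: mem_dualhyp_iff)

lemma frame_Sreg_subset_upper_supp_dual:
  "u \<in> Vset i \<Longrightarrow> frame i ` Sreg K i \<subseteq> upper (fst i) (supp_dual K i u)"
  by (meson subsetI mem_frame_Sreg_iff mem_upper_supp_dual_iff)

lemma obtain_supported_point_above:
  assumes "compact K" "K \<noteq> {}"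
  obtains u w where "u \<in> Vset i" "w \<in> frame i ` Sreg K i" "down (fst i) w = down (fst i) x"
    "w \<in> dualhyp (fst i) (supp_dual K i u)"
proof -
  \<comment> \<open>\<open>H\<^sup>+(u)\<close> admits the points above \<open>x\<close> of height at least \<open>height u\<close>;
    the largest of these bounds is attained since \<open>V\<^sub>i\<close> is compact.\<close>
  define height where "height u = (down (fst i) x \<bullet> u - supp_fun K u) / (u \<bullet> evec i)" for u
  have "\<forall>v\<in>Vset i. v \<bullet> evec i \<noteq> 0"
    using Vset_inner_evec_pos by fastforce
  then have "continuous_on (Vset i) height"
    unfolding height_def by (intro continuous_intros continuous_on_supp_fun assms)
  then have "\<exists>u\<in>Vset i. \<forall>v\<in>Vset i. height v \<le> height u"
    using continuous_attains_sup[OF compact_Vset] evec_in_Vset by (metis empty_iff)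
  then obtain u where u: "u \<in> Vset i" and max: "\<And>v. v \<in> Vset i \<Longrightarrow> height v \<le> height u"
    by blast
  define w where "w = down (fst i) x + height u *\<^sub>R axis (fst i) 1"
  have down_w: "down (fst i) w = down (fst i) x" and w_fst: "w $ fst i = height u"
    by (simp_all add: w_def vec_eq_iff down_def axis_def)
  have "w \<in> frame i ` Sreg K i"
    unfolding mem_frame_Sreg_iff
  proof
    fix v assume v: "v \<in> Vset i"
    with max have "height v \<le> height u" .
    with Vset_inner_evec_pos[OF v]
    show "down (fst i) w \<bullet> v - w $ fst i * (v \<bullet> evec i) \<le> supp_fun K v"
      by (simp add: down_w w_fst height_def pos_divide_le_eq)
  qed
  moreover have "w \<in> dualhyp (fst i) (supp_dual K i u)"
    using Vset_inner_evec_pos[OF u]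
    by (simp add: mem_dualhyp_supp_dual_iff[OF u] down_w w_fst height_def)
  ultimately show ?thesis
    using that u down_w by simp
qed

lemma Ki_alpha_subset_frame_Sreg: "Ki_alpha K i \<alpha> \<subseteq> frame i ` Sreg K i"
  by (auto simp: Ki_alpha_def)

lemma mem_Ki_alpha_if_dist_le:
  assumes "w \<in> frame i ` Sreg K i" "q \<in> Ki_alpha K i \<alpha>"
    and "dist (down (fst i) w) (down (fst i) q) \<le> \<beta>"
  shows "w \<in> Ki_alpha K i (\<alpha> + \<beta>)"
proof -
  obtain z where z: "z \<in> down (fst i) ` frame i ` K" "dist (down (fst i) q) z \<le> \<alpha>"
    using assms(2) unfolding Ki_alpha_def thick_def by blast
  then have "dist (down (fst i) w) z \<le> \<alpha> + \<beta>"
    using assms(3) dist_triangle[of "down (fst i) w" z "down (fst i) q"] by linarith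
  with z(1) assms(1) show ?thesis
    by (auto simp: Ki_alpha_def thick_def down_def)
qed

lemma cap_point_norm_bound:
  fixes q q' a r :: "real^'n"
  assumes cap: "r $ k \<le> down k q \<bullet> r - q $ k + \<epsilon>"
    and above: "down k q' \<bullet> r - q' $ k \<le> r $ k"
    and q_upper: "down k a \<bullet> q - a $ k \<le> q $ k"
    and q'_on: "q' $ k = down k a \<bullet> q' - a $ k"
    and shift: "down k q' = down k q + (\<epsilon> / norm (down k r)) *\<^sub>R down k r"
    and slope: "norm (down k a) \<le> C" and "\<epsilon> > 0"
  shows "norm (down k r) \<le> C + 1"
proof -
  define n where "n = norm (down k r)"
  have step: "norm ((\<epsilon> / n) *\<^sub>R down k r) \<le> \<epsilon>"
    using \<open>\<epsilon> > 0\<close> by (cases "n = 0") (simp_all add: n_def)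
  have "\<epsilon> * n = (\<epsilon> / n) * (down k r \<bullet> down k r)"
    by (cases "n = 0") (simp_all add: n_def dot_square_norm power2_eq_square)
  also have "\<dots> = down k q' \<bullet> r - down k q \<bullet> r"
    by (simp add: shift inner_add_left inner_down_down flip: n_def)
  also have "\<dots> \<le> q' $ k - q $ k + \<epsilon>"
    using cap above by linarith
  also have "q' $ k - q $ k \<le> down k a \<bullet> (down k q' - down k q)"
    using q_upper q'_on by (simp add: inner_diff_right inner_down_down)
  also have "\<dots> = down k a \<bullet> ((\<epsilon> / n) *\<^sub>R down k r)"
    by (simp add: shift n_def)
  also have "\<dots> \<le> norm (down k a) * norm ((\<epsilon> / n) *\<^sub>R down k r)"
    by (rule norm_cauchy_schwarz)
  also have "\<dots> \<le> C * \<epsilon>"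
    using slope step by (intro mult_mono) (auto intro: order_trans[OF norm_ge_zero])
  finally have "\<epsilon> * n \<le> \<epsilon> * (C + 1)"
    by (simp add: algebra_simps)
  then show ?thesis
    using \<open>\<epsilon> > 0\<close> by (simp add: n_def)
qed

lemma obtain_supported_boundary_point_near:
  fixes x :: "real^'n"
  assumes "compact K" "K \<noteq> {}" "q \<in> Ki_alpha K i \<epsilon>"
    and "dist (down (fst i) x) (down (fst i) q) \<le> \<epsilon>"
  obtains q' a where "(q', a) \<in> aug_bd (fst i) (Ki K i \<epsilon>)" "q' \<in> dualhyp (fst i) a"
    "down (fst i) q' = down (fst i) x" "q \<in> upper (fst i) a" "norm (down (fst i) a) \<le> CARD('n)"
proof -
  obtain u q' where u: "u \<in> Vset i" and q': "q' \<in> frame i ` Sreg K i"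
    and down_q': "down (fst i) q' = down (fst i) x" and q'_on: "q' \<in> dualhyp (fst i) (supp_dual K i u)"
    using obtain_supported_point_above[OF assms(1,2)] .
  have S_upper: "frame i ` Sreg K i \<subseteq> upper (fst i) (supp_dual K i u)"
    using frame_Sreg_subset_upper_supp_dual[OF u] .
  then have Ki_upper: "Ki K i \<epsilon> \<subseteq> upper (fst i) (supp_dual K i u)"
    using Ki_alpha_subset_frame_Sreg unfolding Ki_def by blast
  have "q' \<in> Ki K i \<epsilon>"
    unfolding Ki_def mult_2 using assms(4)
    by (intro mem_Ki_alpha_if_dist_le[OF q' assms(3)]) (simp add: down_q')
  then have "(q', supp_dual K i u) \<in> aug_bd (fst i) (Ki K i \<epsilon>)"
    using frontier_if_on_dualhyp[OF Ki_upper _ q'_on] q'_on Ki_upper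
    unfolding aug_bd_def by blast
  moreover have "q \<in> upper (fst i) (supp_dual K i u)"
    using S_upper Ki_alpha_subset_frame_Sreg assms(3) by blast
  ultimately show ?thesis
    using that q'_on down_q' norm_down_supp_dual_le[OF u] by blast
qed

theorem lemma12:
  shows "\<exists>C::real. \<forall>(K::(real^'n) set) (\<epsilon>::real) (i::'n \<times> bool) p.
           convex_body K \<and> \<epsilon> > 0 \<and> useful K i \<epsilon> p \<longrightarrow>
           (\<lambda>(r, b). down (fst i) r) ` cap (fst i) \<epsilon> p (Kdual (fst i) (Ki K i \<epsilon>))
             \<subseteq> cball 0 C"
proof (rule exI[of _ "real CARD('n) + 1"], intro allI impI subsetI)
  fix K :: "(real^'n) set" and \<epsilon> i p z
  assume hyps: "convex_body K \<and> \<epsilon> > 0 \<and> useful K i \<epsilon> p"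
  then have K: "compact K" "K \<noteq> {}" and "\<epsilon> > 0"
    by (auto simp: convex_body_def)
  have q: "snd p \<in> Ki_alpha K i \<epsilon>"
    using hyps unfolding useful_def lower_bd_def by blast
  assume "z \<in> (\<lambda>(r, b). down (fst i) r) ` cap (fst i) \<epsilon> p (Kdual (fst i) (Ki K i \<epsilon>))"
  then obtain r where z: "z = down (fst i) r" and r_dual: "r \<in> Kdual (fst i) (Ki K i \<epsilon>)"
    and r_cap: "r $ fst i \<le> down (fst i) (snd p) \<bullet> r - snd p $ fst i + \<epsilon>"
    using frontier_subset_closed[OF closed_Kdual]
    by (fastforce simp: cap_def aug_bd_def sum_horizontal_eq_inner_down)
  define x where "x = down (fst i) (snd p) + (\<epsilon> / norm z) *\<^sub>R z"
  have "dist (down (fst i) x) (down (fst i) (snd p)) \<le> \<epsilon>"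
    using \<open>\<epsilon> > 0\<close> by (cases "z = 0") (simp_all add: x_def z dist_norm)
  then obtain q' a where "(q', a) \<in> aug_bd (fst i) (Ki K i \<epsilon>)" "q' \<in> dualhyp (fst i) a"
    "down (fst i) q' = down (fst i) x" "snd p \<in> upper (fst i) a" "norm (down (fst i) a) \<le> CARD('n)"
    using obtain_supported_boundary_point_near[OF K q] by blast
  moreover from this(1) r_dual have "r \<in> upper (fst i) q'"
    unfolding Kdual_def by blast
  ultimately have "norm (down (fst i) r) \<le> real CARD('n) + 1"
    using r_cap \<open>\<epsilon> > 0\<close> unfolding mem_upper_iff mem_dualhyp_iff
    by (intro cap_point_norm_bound[where q = "snd p" and q' = q' and a = a])
      (simp_all add: x_def z)
  then show "z \<in> cball 0 (real CARD('n) + 1)"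
    by (simp add: z)
qed

end
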